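(* Let $(R,\mathfrak m)$ be a Noetherian local ring and $M$ a finitely generated $R$-module with $\dim M=d\ge 1$. Then there exists a positive integer $n_4$ such that for all ideals $K\subseteq\mathfrak m^{n_4}$ we have $$(KM+H^0_{\mathfrak m}(M)):_M\mathfrak m=(KM:_M\mathfrak m)+H^0_{\mathfrak m}(M).$$
   Context: For a submodule $N\subseteq M$ and an ideal $J$, $N:_MJ=\{x\in M: Jx\subseteq N\}$. $H^0_{\mathfrak m}(M)$ is the submodule of elements of $M$ annihilated by some power of $\mathfrak m$. *)

theory Defs
  imports Main "HOL-Library.Extended_Nat"
begin

(* Commutative ring R = UNIV :: 'a :: comm_ring_1.  Ideals are R-submodules of R,
   generated ideals are spans in R viewed as a module over itself. *)

definition is_ideal :: "'a::comm_ring_1 set \<Rightarrow> bool" where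
  "is_ideal I \<longleftrightarrow> module.subspace ((*) :: 'a \<Rightarrow> 'a \<Rightarrow> 'a) I"

definition ideal_gen :: "'a::comm_ring_1 set \<Rightarrow> 'a set" where
  "ideal_gen S = module.span ((*) :: 'a \<Rightarrow> 'a \<Rightarrow> 'a) S"

definition prime_ideal :: "'a::comm_ring_1 set \<Rightarrow> bool" where
  "prime_ideal P \<longleftrightarrow> is_ideal P \<and> P \<noteq> UNIV \<and> (\<forall>a b. a * b \<in> P \<longrightarrow> a \<in> P \<or> b \<in> P)"

definition maximal_ideal :: "'a::comm_ring_1 set \<Rightarrow> bool" where
  "maximal_ideal m \<longleftrightarrow> is_ideal m \<and> m \<noteq> UNIV \<and>
     (\<forall>J. is_ideal J \<and> m \<subseteq> J \<longrightarrow> J = m \<or> J = UNIV)"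

definition noetherian_ring :: "'a::comm_ring_1 itself \<Rightarrow> bool" where
  "noetherian_ring _ \<longleftrightarrow> (\<forall>I::'a set. is_ideal I \<longrightarrow> (\<exists>F. finite F \<and> I = ideal_gen F))"

definition local_ring :: "'a::comm_ring_1 set \<Rightarrow> bool" where
  "local_ring m \<longleftrightarrow> maximal_ideal m \<and> (\<forall>J. maximal_ideal J \<longrightarrow> J = m)"

definition ideal_mult :: "'a::comm_ring_1 set \<Rightarrow> 'a set \<Rightarrow> 'a set" where
  "ideal_mult I J = ideal_gen {a * b | a b. a \<in> I \<and> b \<in> J}"

primrec ideal_pow :: "'a::comm_ring_1 set \<Rightarrow> nat \<Rightarrow> 'a set" where
  "ideal_pow I 0 = UNIV"
| "ideal_pow I (Suc n) = ideal_mult I (ideal_pow I n)"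

(* The module M is the whole type 'b, with scalar multiplication scale, satisfying
   'module scale'. *)

definition fin_gen_module :: "('a::comm_ring_1 \<Rightarrow> 'b::ab_group_add \<Rightarrow> 'b) \<Rightarrow> bool" where
  "fin_gen_module scale \<longleftrightarrow> (\<exists>F. finite F \<and> module.span scale F = UNIV)"

definition annihilator :: "('a::comm_ring_1 \<Rightarrow> 'b::ab_group_add \<Rightarrow> 'b) \<Rightarrow> 'a set" where
  "annihilator scale = {a. \<forall>x. scale a x = 0}"

definition module_dim :: "('a::comm_ring_1 \<Rightarrow> 'b::ab_group_add \<Rightarrow> 'b) \<Rightarrow> enat" where
  "module_dim scale = (SUP n \<in> {n. \<exists>P :: nat \<Rightarrow> 'a set.
        (\<forall>i\<le>n. prime_ideal (P i) \<and> annihilator scale \<subseteq> P i) \<and>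
        (\<forall>i<n. P i \<subset> P (Suc i))}. enat n)"

definition ideal_smult :: "('a::comm_ring_1 \<Rightarrow> 'b::ab_group_add \<Rightarrow> 'b) \<Rightarrow> 'a set \<Rightarrow> 'b set" where
  "ideal_smult scale K = module.span scale {scale k x | k x. k \<in> K}"

definition mod_colon :: "('a::comm_ring_1 \<Rightarrow> 'b::ab_group_add \<Rightarrow> 'b) \<Rightarrow> 'b set \<Rightarrow> 'a set \<Rightarrow> 'b set" where
  "mod_colon scale N J = {x. \<forall>j\<in>J. scale j x \<in> N}"

definition submod_sum :: "'b::ab_group_add set \<Rightarrow> 'b set \<Rightarrow> 'b set" where
  "submod_sum N L = {x + y | x y. x \<in> N \<and> y \<in> L}"

definition local_coh0 :: "('a::comm_ring_1 \<Rightarrow> 'b::ab_group_add \<Rightarrow> 'b) \<Rightarrow> 'a set \<Rightarrow> 'b set" where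
  "local_coh0 scale m = {x. \<exists>n. \<forall>a\<in>ideal_pow m n. scale a x = 0}"

end

theory Submission
  imports Defs "HOL-Library.Function_Algebras" "HOL-Library.Multiset"
begin

text \<open>Let \<open>H = H\<^sup>0\<^sub>m(M)\<close>. As a submodule of a finitely generated module over a noetherian ring,
  \<open>H\<close> is finitely generated, so \<open>m\<^sup>t H = 0\<close> for some \<open>t\<close>, and therefore \<open>H :\<^sub>M m = H\<close>.
  The main tool is a Krull-intersection type lemma: if \<open>I\<^sup>t Z \<subseteq> U\<close> for submodules \<open>U \<subseteq> E\<close>,
  then \<open>(I\<^sup>N E + U) \<inter> Z \<subseteq> U\<close> for some \<open>N\<close>. With \<open>U = 0\<close> and \<open>Z = H\<close> it gives
  \<open>m\<^sup>k M \<inter> H = 0\<close>; applied to the embedding \<open>y \<mapsto> (a y)\<^sub>a\<^sub>\<in>\<^sub>A\<close> of \<open>M\<close> into \<open>M\<^sup>A\<close>, where \<open>A\<close>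
  generates \<open>m\<close>, it gives \<open>(m\<^sup>N M + H) :\<^sub>M m \<subseteq> m\<^sup>k M + H\<close>. Now let \<open>K \<subseteq> m\<^sup>n\<close> with \<open>n > N, k\<close>
  and \<open>x \<in> (KM + H) :\<^sub>M m\<close>. Then \<open>x = y + h\<close> with \<open>y \<in> m\<^sup>k M\<close> and \<open>h \<in> H\<close>, and for \<open>j \<in> m\<close>,
  writing \<open>j x = \<kappa> + h'\<close> with \<open>\<kappa> \<in> KM\<close>, the element \<open>j y - \<kappa>\<close> lies in \<open>m\<^sup>k M \<inter> H = 0\<close>,
  so \<open>y \<in> KM :\<^sub>M m\<close>.\<close>

section \<open>Ideals and their powers\<close>

interpretation ring_module: module "(*) :: 'a::comm_ring_1 \<Rightarrow> 'a \<Rightarrow> 'a"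
  by unfold_locales (auto simp: algebra_simps)

lemma is_ideal_ideal_gen [simp]: "is_ideal (ideal_gen S)"
  unfolding is_ideal_def ideal_gen_def by simp

lemma ideal_gen_base: "x \<in> S \<Longrightarrow> x \<in> ideal_gen S"
  unfolding ideal_gen_def by (rule ring_module.span_base)

lemma ideal_gen_minimal: "S \<subseteq> I \<Longrightarrow> is_ideal I \<Longrightarrow> ideal_gen S \<subseteq> I"
  unfolding ideal_gen_def is_ideal_def by (rule ring_module.span_minimal)

lemma ideal_mult_closed: "is_ideal I \<Longrightarrow> x \<in> I \<Longrightarrow> a * x \<in> I"
  unfolding is_ideal_def by (rule ring_module.subspace_scale)

lemma is_ideal_mult_preimage: "is_ideal J \<Longrightarrow> is_ideal {b. a * b \<in> J}"
  unfolding is_ideal_def ring_module.subspace_def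
  by (auto simp: distrib_left) (metis mult.assoc mult.left_commute)

lemma ideal_gen_mult_closed:
  assumes J: "is_ideal J" and ST: "\<And>s t. s \<in> S \<Longrightarrow> t \<in> T \<Longrightarrow> s * t \<in> J"
    and a: "a \<in> ideal_gen S" and b: "b \<in> ideal_gen T"
  shows "a * b \<in> J"
proof -
  have "ideal_gen T \<subseteq> {t. s * t \<in> J}" if "s \<in> S" for s
    using ST[OF that] by (intro ideal_gen_minimal is_ideal_mult_preimage J) auto
  then have "ideal_gen S \<subseteq> {s. b * s \<in> J}"
    using b by (intro ideal_gen_minimal is_ideal_mult_preimage J) (auto simp: mult.commute)
  then show ?thesis
    using a by (auto simp: mult.commute)
qed

lemma ideal_mult_subsetI:
  "is_ideal J \<Longrightarrow> (\<And>a b. a \<in> I \<Longrightarrow> b \<in> I' \<Longrightarrow> a * b \<in> J) \<Longrightarrow> ideal_mult I I' \<subseteq> J"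
  unfolding ideal_mult_def by (rule ideal_gen_minimal) auto

lemma is_ideal_ideal_mult [simp]: "is_ideal (ideal_mult I J)"
  unfolding ideal_mult_def by simp

lemma is_ideal_ideal_pow [simp]: "is_ideal (ideal_pow I n)"
  by (cases n) (simp_all add: is_ideal_def[of UNIV])

lemma ideal_pow_Suc_subset: "ideal_pow I (Suc n) \<subseteq> ideal_pow I n"
  unfolding ideal_pow.simps by (intro ideal_mult_subsetI is_ideal_ideal_pow ideal_mult_closed)

lemma ideal_pow_antimono: "n \<le> n' \<Longrightarrow> ideal_pow I n' \<subseteq> ideal_pow I n"
  by (induction n' rule: dec_induct) (use ideal_pow_Suc_subset in blast)+

lemma power_in_ideal_pow: "a \<in> I \<Longrightarrow> a ^ n \<in> ideal_pow I n"
  by (induction n) (auto simp: ideal_mult_def intro: ideal_gen_base)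

definition monomials :: "'a::comm_ring_1 set \<Rightarrow> nat \<Rightarrow> 'a set" where
  "monomials A n = {prod_mset M | M. set_mset M \<subseteq> A \<and> size M = n}"

lemma ideal_pow_ideal_gen_subset: "ideal_pow (ideal_gen A) n \<subseteq> ideal_gen (monomials A n)"
proof (induction n)
  case 0
  have "1 \<in> monomials A 0"
    unfolding monomials_def by (intro CollectI exI[of _ "{#}"]) simp
  then have "x * 1 \<in> ideal_gen (monomials A 0)" for x
    by (intro ideal_mult_closed is_ideal_ideal_gen ideal_gen_base)
  then show ?case
    by auto
next
  case (Suc n)
  have step: "a * p \<in> monomials A (Suc n)" if a: "a \<in> A" and p: "p \<in> monomials A n" for a p
  proof -
    obtain M where "p = prod_mset M" "set_mset M \<subseteq> A" "size M = n"
      using p unfolding monomials_def by blast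
    then show ?thesis
      using a unfolding monomials_def by (intro CollectI exI[of _ "add_mset a M"]) auto
  qed
  have "a * b \<in> ideal_gen (monomials A (Suc n))"
    if "a \<in> ideal_gen A" "b \<in> ideal_pow (ideal_gen A) n" for a b
    by (rule ideal_gen_mult_closed[of _ A "monomials A n"])
      (use that Suc.IH step in \<open>auto intro: ideal_gen_base\<close>)
  then show ?case
    unfolding ideal_pow.simps by (intro ideal_mult_subsetI is_ideal_ideal_gen)
qed

text \<open>Pigeonhole: a monomial of degree \<open>card A * j + 1\<close> contains some generator at least \<open>j\<close> times.\<close>

lemma monomials_subset_ideal_gen_powers:
  assumes "finite A"
  shows "monomials A (card A * j + 1) \<subseteq> ideal_gen ((\<lambda>a. a ^ j) ` A)"
proof
  fix p assume "p \<in> monomials A (card A * j + 1)"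
  then obtain M where M: "p = prod_mset M" "set_mset M \<subseteq> A" "size M = card A * j + 1"
    unfolding monomials_def by blast
  have "\<exists>a\<in>A. j \<le> count M a"
  proof (rule ccontr)
    assume "\<not> ?thesis"
    then have "count M a \<le> j - 1" if "a \<in> A" for a
      using that by fastforce
    then have "sum (count M) A \<le> card A * (j - 1)"
      using sum_bounded_above[of A "count M" "j - 1"] by simp
    moreover have "sum (count M) A = size M"
      unfolding size_multiset_overloaded_eq
      by (intro sum.mono_neutral_right) (use assms M(2) in \<open>auto simp: not_in_iff\<close>)
    moreover have "card A * (j - 1) \<le> card A * j"
      by simp
    ultimately show False
      using M(3) by linarith
  qed
  then obtain a where a: "a \<in> A" "replicate_mset j a \<subseteq># M"
    by (auto simp: count_le_replicate_mset_subset_eq)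
  from a(2) have "p = prod_mset (replicate_mset j a + (M - replicate_mset j a))"
    unfolding M(1) by (simp only: subset_mset.add_diff_inverse)
  also have "\<dots> = prod_mset (M - replicate_mset j a) * a ^ j"
    by (simp add: mult.commute)
  finally have p_eq: "p = prod_mset (M - replicate_mset j a) * a ^ j" .
  have "a ^ j \<in> ideal_gen ((\<lambda>a. a ^ j) ` A)"
    using a(1) by (intro ideal_gen_base) simp
  then show "p \<in> ideal_gen ((\<lambda>a. a ^ j) ` A)"
    unfolding p_eq by (rule ideal_mult_closed[OF is_ideal_ideal_gen])
qed

lemma ideal_pow_subset_if_powers_of_generators:
  assumes "finite A" "is_ideal J" "\<And>a. a \<in> A \<Longrightarrow> a ^ j \<in> J"
  shows "ideal_pow (ideal_gen A) (card A * j + 1) \<subseteq> J"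
proof -
  have "ideal_gen ((\<lambda>a. a ^ j) ` A) \<subseteq> J"
    using assms(2,3) by (intro ideal_gen_minimal) auto
  with monomials_subset_ideal_gen_powers[OF assms(1)]
  have "monomials A (card A * j + 1) \<subseteq> J"
    by (rule order_trans)
  then have "ideal_gen (monomials A (card A * j + 1)) \<subseteq> J"
    using assms(2) by (rule ideal_gen_minimal)
  then show ?thesis
    by (rule order_trans[OF ideal_pow_ideal_gen_subset])
qed

section \<open>Submodules over a noetherian ring\<close>

lemma mem_submod_sum: "x \<in> submod_sum N L \<longleftrightarrow> (\<exists>y\<in>N. \<exists>z\<in>L. x = y + z)"
  unfolding submod_sum_def by blast

lemma submod_sumI: "y \<in> N \<Longrightarrow> z \<in> L \<Longrightarrow> y + z \<in> submod_sum N L"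
  unfolding submod_sum_def by blast

lemma submod_sum_mono: "N \<subseteq> N' \<Longrightarrow> L \<subseteq> L' \<Longrightarrow> submod_sum N L \<subseteq> submod_sum N' L'"
  unfolding submod_sum_def by blast

lemma mod_colon_mono: "N \<subseteq> N' \<Longrightarrow> mod_colon scale N J \<subseteq> mod_colon scale N' J"
  unfolding mod_colon_def by blast

lemma mod_colon_antimono: "J \<subseteq> J' \<Longrightarrow> mod_colon scale N J' \<subseteq> mod_colon scale N J"
  unfolding mod_colon_def by blast

context module
begin

lemma subspace_scale_preimage:
  assumes "subspace S"
  shows "subspace {x. scale c x \<in> S}"
proof (rule subspaceI)
  show "scale d x \<in> {x. scale c x \<in> S}" if "x \<in> {x. scale c x \<in> S}" for d x
    using subspace_scale[OF assms, of "scale c x" d] that by (simp add: mult.commute)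
qed (use assms in \<open>auto simp: subspace_0 subspace_add scale_right_distrib\<close>)

lemma subspace_mod_colon:
  assumes "subspace S"
  shows "subspace (mod_colon scale S J)"
proof -
  have "mod_colon scale S J = (\<Inter>j\<in>J. {x. scale j x \<in> S})"
    unfolding mod_colon_def by blast
  then show ?thesis
    by (simp add: subspace_Int subspace_scale_preimage[OF assms])
qed

lemma is_ideal_scale_colon:
  assumes "subspace S"
  shows "is_ideal {c. \<forall>x\<in>X. scale c x \<in> S}"
  using assms unfolding is_ideal_def ring_module.subspace_def subspace_def
  by (auto simp: scale_left_distrib simp flip: scale_scale)

lemma subspace_submod_sum:
  assumes "subspace N" "subspace L"
  shows "subspace (submod_sum N L)"
proof (rule subspaceI)
  show "0 \<in> submod_sum N L"
    using submod_sumI[OF subspace_0 subspace_0] assms by fastforce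
  show "x + x' \<in> submod_sum N L" if x: "x \<in> submod_sum N L" and x': "x' \<in> submod_sum N L" for x x'
  proof -
    obtain y z y' z' where "y \<in> N" "z \<in> L" "x = y + z" "y' \<in> N" "z' \<in> L" "x' = y' + z'"
      using x x' unfolding mem_submod_sum by blast
    then have "x + x' = (y + y') + (z + z')" "y + y' \<in> N" "z + z' \<in> L"
      using assms by (simp_all add: algebra_simps subspace_add)
    then show ?thesis
      by (simp add: submod_sumI)
  qed
  show "scale c x \<in> submod_sum N L" if x: "x \<in> submod_sum N L" for c x
  proof -
    obtain y z where "y \<in> N" "z \<in> L" "x = y + z"
      using x unfolding mem_submod_sum by blast
    then show ?thesis
      using assms by (simp add: scale_right_distrib submod_sumI subspace_scale)
  qed
qed

lemma subspace_ideal_smult: "subspace (ideal_smult scale K)"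
  unfolding ideal_smult_def by simp

lemma ideal_smult_mono: "K \<subseteq> K' \<Longrightarrow> ideal_smult scale K \<subseteq> ideal_smult scale K'"
  unfolding ideal_smult_def by (intro span_mono) blast

lemma module_hom_scale_by: "module_hom scale scale (scale c)"
  by (simp add: module_hom_iff module_axioms scale_right_distrib mult.commute)

lemma mod_colon_ideal_gen:
  assumes "subspace S"
  shows "mod_colon scale S A \<subseteq> mod_colon scale S (ideal_gen A)"
proof
  fix x assume "x \<in> mod_colon scale S A"
  then have "ideal_gen A \<subseteq> {c. \<forall>x\<in>{x}. scale c x \<in> S}"
    unfolding mod_colon_def by (intro ideal_gen_minimal is_ideal_scale_colon assms) auto
  then show "x \<in> mod_colon scale S (ideal_gen A)"
    unfolding mod_colon_def by blast
qed

text \<open>The coefficients \<open>c\<close> with \<open>c f \<in> N + span F\<close> form an ideal; lifting its finitely many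
  generators to \<open>N\<close> gives \<open>B\<close>.\<close>

lemma noetherian_finite_subset_modulo_span:
  assumes noeth: "noetherian_ring TYPE('a)" and N: "subspace N" "N \<subseteq> span (insert f F)"
  shows "\<exists>B. finite B \<and> B \<subseteq> N \<and> N \<subseteq> submod_sum (span B) (span F)"
proof -
  have "is_ideal {c. scale c f \<in> submod_sum N (span F)}"
    using is_ideal_scale_colon[OF subspace_submod_sum[OF N(1) subspace_span], of "{f}"] by simp
  then obtain C where C: "finite C" "{c. scale c f \<in> submod_sum N (span F)} = ideal_gen C"
    using noeth unfolding noetherian_ring_def by blast
  have "\<forall>c\<in>C. \<exists>g. g \<in> N \<and> scale c f - g \<in> span F"
  proof
    fix c assume "c \<in> C"
    then have "scale c f \<in> submod_sum N (span F)"
      using ideal_gen_base[of c C] unfolding C(2)[symmetric] by simp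
    then show "\<exists>g. g \<in> N \<and> scale c f - g \<in> span F"
      unfolding mem_submod_sum by force
  qed
  then obtain g where g: "\<forall>c\<in>C. g c \<in> N \<and> scale c f - g c \<in> span F"
    using bchoice by meson
  have "ideal_gen C \<subseteq> {c. \<forall>x\<in>{f}. scale c x \<in> submod_sum (span (g ` C)) (span F)}"
  proof (intro ideal_gen_minimal is_ideal_scale_colon subspace_submod_sum subspace_span subsetI)
    fix c assume "c \<in> C"
    then have "g c \<in> span (g ` C)"
      by (intro span_base imageI)
    then have "g c + (scale c f - g c) \<in> submod_sum (span (g ` C)) (span F)"
      using g \<open>c \<in> C\<close> by (intro submod_sumI) auto
    then show "c \<in> {c. \<forall>x\<in>{f}. scale c x \<in> submod_sum (span (g ` C)) (span F)}"
      by simp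
  qed
  moreover have "N \<subseteq> submod_sum (span (g ` C)) (span F)"
  proof
    fix x assume x: "x \<in> N"
    then obtain k where k: "x - scale k f \<in> span F"
      using N(2) span_breakdown_eq by blast
    have "x + - (x - scale k f) \<in> submod_sum N (span F)"
      using x k by (intro submod_sumI span_neg)
    then have "k \<in> ideal_gen C"
      unfolding C(2)[symmetric] by simp
    with calculation obtain w s where w: "w \<in> span (g ` C)" "s \<in> span F" "scale k f = w + s"
      unfolding mem_submod_sum by blast
    then have "w + ((x - scale k f) + s) \<in> submod_sum (span (g ` C)) (span F)"
      using k by (intro submod_sumI span_add)
    then show "x \<in> submod_sum (span (g ` C)) (span F)"
      using w(3) by (simp add: algebra_simps)
  qed
  ultimately show ?thesis
    using C(1) g by blast
qed

lemma noetherian_subspace_finitely_generated: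
  assumes noeth: "noetherian_ring TYPE('a)" and "finite F"
  shows "subspace N \<Longrightarrow> N \<subseteq> span F \<Longrightarrow> \<exists>G. finite G \<and> G \<subseteq> N \<and> span G = N"
  using \<open>finite F\<close>
proof (induction F arbitrary: N rule: finite_induct)
  case empty
  then show ?case
    using subspace_0 by (intro exI[of _ "{}"]) auto
next
  case (insert f F N)
  obtain G' where G': "finite G'" "G' \<subseteq> N" "span G' = N \<inter> span F"
    using insert.IH[of "N \<inter> span F"] insert.prems subspace_inter by auto
  obtain B where B: "finite B" "B \<subseteq> N" "N \<subseteq> submod_sum (span B) (span F)"
    using noetherian_finite_subset_modulo_span[OF noeth insert.prems] by blast
  have "N \<subseteq> span (G' \<union> B)"
  proof
    fix x assume "x \<in> N"
    then have "x \<in> submod_sum (span B) (span F)"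
      using B(3) by blast
    then obtain w s where w: "w \<in> span B" "s \<in> span F" "x = w + s"
      unfolding mem_submod_sum by blast
    have "s = x - w"
      using w(3) by simp
    then have "s \<in> span G'"
      using span_minimal[OF B(2) insert.prems(1)] \<open>x \<in> N\<close> w(1,2) G'(3)
        subspace_diff[OF insert.prems(1)] by blast
    then show "x \<in> span (G' \<union> B)"
      unfolding w(3) using w(1) span_mono[of B "G' \<union> B"] span_mono[of G' "G' \<union> B"]
      by (blast intro: span_add)
  qed
  moreover have "span (G' \<union> B) \<subseteq> N"
    using G'(2) B(2) insert.prems(1) by (intro span_minimal) auto
  ultimately show ?case
    using G'(1,2) B(1,2) by (intro exI[of _ "G' \<union> B"]) auto
qed

lemma subspace_Union_chain:
  assumes "C \<noteq> {}" "\<And>X. X \<in> C \<Longrightarrow> subspace X"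
    and chain: "\<And>X Y. X \<in> C \<Longrightarrow> Y \<in> C \<Longrightarrow> X \<subseteq> Y \<or> Y \<subseteq> X"
  shows "subspace (\<Union>C)"
proof (rule subspaceI)
  show "0 \<in> \<Union>C"
    using assms(1,2) subspace_0 by blast
  show "x + y \<in> \<Union>C" if x: "x \<in> \<Union>C" and y: "y \<in> \<Union>C" for x y
  proof -
    obtain X Y where XY: "X \<in> C" "Y \<in> C" "x \<in> X" "y \<in> Y"
      using x y by blast
    then obtain Z where "Z \<in> C" "x \<in> Z" "y \<in> Z"
      using chain[OF XY(1,2)] by blast
    then show ?thesis
      using assms(2) subspace_add by blast
  qed
  show "scale c x \<in> \<Union>C" if "x \<in> \<Union>C" for c x
    using that assms(2) subspace_scale by blast
qed

lemma noetherian_exists_maximal_subspace: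
  assumes noeth: "noetherian_ring TYPE('a)" and "finite F" and "Q0 \<in> \<F>"
    and \<F>: "\<And>Q. Q \<in> \<F> \<Longrightarrow> subspace Q \<and> Q \<subseteq> span F"
  shows "\<exists>Q\<in>\<F>. \<forall>Q'\<in>\<F>. Q \<subseteq> Q' \<longrightarrow> Q' = Q"
proof (rule Zorn_Lemma2, rule ballI)
  fix C assume C: "C \<in> chains \<F>"
  show "\<exists>B\<in>\<F>. \<forall>X\<in>C. X \<subseteq> B"
  proof (cases "C = {}")
    case True
    then show ?thesis
      using \<open>Q0 \<in> \<F>\<close> by blast
  next
    case False
    have "subspace (\<Union>C)"
      using False \<F> chainsD2[OF C] chainsD[OF C] by (intro subspace_Union_chain) auto
    moreover have "\<Union>C \<subseteq> span F"
      using \<F> chainsD2[OF C] by blast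
    ultimately obtain G where G: "finite G" "G \<subseteq> \<Union>C" "span G = \<Union>C"
      by (metis noetherian_subspace_finitely_generated[OF noeth \<open>finite F\<close>])
    have "subset.chain \<F> C"
      using C unfolding chains_alt_def by simp
    then obtain B where B: "B \<in> C" "G \<subseteq> B"
      by (rule finite_subset_Union_chain[OF G(1,2) False])
    have "subspace B"
      using \<F> chainsD2[OF C] B(1) by blast
    with B(2) have "\<Union>C \<subseteq> B"
      unfolding G(3)[symmetric] by (rule span_minimal)
    then show ?thesis
      using B(1) chainsD2[OF C] by blast
  qed
qed

lemma noetherian_ascending_chain_stabilises:
  fixes C :: "nat \<Rightarrow> 'b set"
  assumes noeth: "noetherian_ring TYPE('a)" and "finite F"
    and "\<And>j. subspace (C j)" "\<And>j. C j \<subseteq> span F" and "mono C"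
  shows "\<exists>j0. \<forall>j\<ge>j0. C j = C j0"
proof -
  have "\<exists>Q\<in>range C. \<forall>Q'\<in>range C. Q \<subseteq> Q' \<longrightarrow> Q' = Q"
    by (rule noetherian_exists_maximal_subspace[OF noeth \<open>finite F\<close>, of "C 0"]) (use assms in auto)
  then obtain j0 where j0: "\<forall>Q'\<in>range C. C j0 \<subseteq> Q' \<longrightarrow> Q' = C j0"
    by (elim bexE imageE) simp
  have "C j = C j0" if "j \<ge> j0" for j
    using j0 monoD[OF \<open>mono C\<close> that] by simp
  then show ?thesis
    by blast
qed

lemma power_colon_chain_stabilises:
  assumes noeth: "noetherian_ring TYPE('a)" and "finite F" and Q: "subspace Q"
  shows "\<exists>j0. \<forall>j\<ge>j0. span F \<inter> {y. scale (a ^ j) y \<in> Q} = span F \<inter> {y. scale (a ^ j0) y \<in> Q}"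
proof (rule noetherian_ascending_chain_stabilises[OF noeth \<open>finite F\<close>])
  show "mono (\<lambda>j. span F \<inter> {y. scale (a ^ j) y \<in> Q})"
  proof (rule monoI, rule subsetI)
    fix i j :: nat and y assume "i \<le> j" and y: "y \<in> span F \<inter> {y. scale (a ^ i) y \<in> Q}"
    then have power: "a ^ j = a ^ (j - i) * a ^ i"
      by (simp flip: power_add)
    from y have "y \<in> span F" "scale (a ^ (j - i)) (scale (a ^ i) y) \<in> Q"
      using subspace_scale[OF Q, of "scale (a ^ i) y"] by blast+
    then show "y \<in> span F \<inter> {y. scale (a ^ j) y \<in> Q}"
      unfolding power by simp
  qed
qed (auto intro: subspace_inter subspace_scale_preimage Q)

lemma submod_sum_power_image_inter_subset:
  assumes Q: "subspace Q" "Q \<inter> Z \<subseteq> U"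
    and killed: "\<And>z. z \<in> Z \<Longrightarrow> scale (a ^ t) z \<in> Q"
    and stable: "\<And>y. y \<in> span F \<Longrightarrow> scale (a ^ (t + j)) y \<in> Q \<Longrightarrow> scale (a ^ j) y \<in> Q"
  shows "submod_sum Q (scale (a ^ j) ` span F) \<inter> Z \<subseteq> U"
proof
  fix z assume z: "z \<in> submod_sum Q (scale (a ^ j) ` span F) \<inter> Z"
  then have "z \<in> submod_sum Q (scale (a ^ j) ` span F)" "z \<in> Z"
    by blast+
  then obtain q y where qy: "q \<in> Q" "y \<in> span F" "z = q + scale (a ^ j) y"
    unfolding mem_submod_sum by blast
  have "scale (a ^ (t + j)) y = scale (a ^ t) z - scale (a ^ t) q"
    unfolding qy(3) by (simp add: scale_right_distrib power_add)
  also have "\<dots> \<in> Q"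
    by (rule subspace_diff[OF Q(1) killed[OF \<open>z \<in> Z\<close>] subspace_scale[OF Q(1) qy(1)]])
  finally have "scale (a ^ j) y \<in> Q"
    by (rule stable[OF qy(2)])
  then have "z \<in> Q"
    unfolding qy(3) by (rule subspace_add[OF Q(1) qy(1)])
  then show "z \<in> U"
    using \<open>z \<in> Z\<close> Q(2) by blast
qed

lemma maximal_avoiding_subspace_absorbs_power:
  assumes noeth: "noetherian_ring TYPE('a)" and "finite F"
    and Q: "subspace Q" "Q \<subseteq> span F" "Q \<inter> Z \<subseteq> U"
    and maximal: "\<And>Q'. subspace Q' \<Longrightarrow> Q' \<subseteq> span F \<Longrightarrow> Q \<subseteq> Q' \<Longrightarrow> Q' \<inter> Z \<subseteq> U \<Longrightarrow> Q' = Q"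
    and killed: "\<And>z. z \<in> Z \<Longrightarrow> scale (a ^ t) z \<in> Q"
  shows "\<exists>j. scale (a ^ j) ` span F \<subseteq> Q"
proof -
  obtain j where j: "\<And>j'. j' \<ge> j \<Longrightarrow>
      span F \<inter> {y. scale (a ^ j') y \<in> Q} = span F \<inter> {y. scale (a ^ j) y \<in> Q}"
    using power_colon_chain_stabilises[OF noeth \<open>finite F\<close> Q(1)] by blast
  define Q' where "Q' = submod_sum Q (scale (a ^ j) ` span F)"
  have "subspace Q'"
    unfolding Q'_def using module_hom.subspace_image[OF module_hom_scale_by subspace_span]
    by (intro subspace_submod_sum Q(1))
  moreover have "Q' \<subseteq> span F"
  proof
    fix x assume "x \<in> Q'"
    then obtain q y where "q \<in> Q" "y \<in> span F" "x = q + scale (a ^ j) y"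
      unfolding Q'_def mem_submod_sum by blast
    then show "x \<in> span F"
      using Q(2) by (auto intro: span_add span_scale)
  qed
  moreover have "Q \<subseteq> Q'"
  proof
    fix q assume "q \<in> Q"
    then have "q + scale (a ^ j) 0 \<in> Q'"
      unfolding Q'_def by (intro submod_sumI imageI span_zero)
    then show "q \<in> Q'"
      by simp
  qed
  moreover have "Q' \<inter> Z \<subseteq> U"
    unfolding Q'_def by (rule submod_sum_power_image_inter_subset[OF Q(1,3) killed]) (use j[of "t + j"] in auto)
  ultimately have "Q' = Q"
    by (rule maximal)
  have "scale (a ^ j) ` span F \<subseteq> Q"
  proof
    fix x assume "x \<in> scale (a ^ j) ` span F"
    then have "0 + x \<in> Q'"
      unfolding Q'_def by (intro submod_sumI subspace_0 Q(1))
    then show "x \<in> Q"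
      using \<open>Q' = Q\<close> by simp
  qed
  then show ?thesis ..
qed

lemma ideal_pow_scale_image_subset:
  assumes "finite A" "subspace Q" "\<forall>a\<in>A. \<exists>j. scale (a ^ j) ` E \<subseteq> Q"
  shows "\<exists>N. \<forall>c\<in>ideal_pow (ideal_gen A) N. scale c ` E \<subseteq> Q"
proof -
  obtain j where j: "\<forall>a\<in>A. scale (a ^ j a) ` E \<subseteq> Q"
    using assms(3) bchoice by meson
  define T where "T = {c. \<forall>e\<in>E. scale c e \<in> Q}"
  have T: "is_ideal T"
    unfolding T_def by (rule is_ideal_scale_colon[OF assms(2)])
  have "a ^ (\<Sum>a\<in>A. j a) \<in> T" if "a \<in> A" for a
  proof -
    have "j a \<le> (\<Sum>a\<in>A. j a)"
      using assms(1) that by (intro member_le_sum) auto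
    then have "a ^ (\<Sum>a\<in>A. j a) = a ^ ((\<Sum>a\<in>A. j a) - j a) * a ^ j a"
      by (simp flip: power_add)
    moreover have "a ^ j a \<in> T"
      using j that unfolding T_def by blast
    ultimately show ?thesis
      using ideal_mult_closed[OF T] by simp
  qed
  then have "ideal_pow (ideal_gen A) (card A * (\<Sum>a\<in>A. j a) + 1) \<subseteq> T"
    by (intro ideal_pow_subset_if_powers_of_generators assms(1) T)
  then show ?thesis
    unfolding T_def by blast
qed

text \<open>Take \<open>Q \<supseteq> U\<close> maximal with \<open>Q \<inter> Z \<subseteq> U\<close>; it absorbs a power of every generator of \<open>I\<close>,
  hence \<open>I\<^sup>N span F\<close> for some \<open>N\<close>.\<close>

lemma ideal_pow_sum_inter_subset:
  assumes noeth: "noetherian_ring TYPE('a)" and "finite F" and "is_ideal I"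
    and U: "subspace U" "U \<subseteq> span F"
    and killed: "\<And>c z. c \<in> ideal_pow I t \<Longrightarrow> z \<in> Z \<Longrightarrow> scale c z \<in> U"
  shows "\<exists>N. Z \<inter> submod_sum (span {scale c e | c e. c \<in> ideal_pow I N \<and> e \<in> span F}) U \<subseteq> U"
proof -
  obtain A where A: "finite A" "I = ideal_gen A"
    using noeth \<open>is_ideal I\<close> unfolding noetherian_ring_def by blast
  define \<F> where "\<F> = {Q. subspace Q \<and> Q \<subseteq> span F \<and> U \<subseteq> Q \<and> Q \<inter> Z \<subseteq> U}"
  have "\<exists>Q\<in>\<F>. \<forall>Q'\<in>\<F>. Q \<subseteq> Q' \<longrightarrow> Q' = Q"
    by (rule noetherian_exists_maximal_subspace[OF noeth \<open>finite F\<close>, of U]) (auto simp: \<F>_def U)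
  then obtain Q where "Q \<in> \<F>" and maximal: "\<And>Q'. Q' \<in> \<F> \<Longrightarrow> Q \<subseteq> Q' \<Longrightarrow> Q' = Q"
    by blast
  then have Q: "subspace Q" "Q \<subseteq> span F" "U \<subseteq> Q" "Q \<inter> Z \<subseteq> U"
    unfolding \<F>_def by simp_all
  have "\<forall>a\<in>A. \<exists>j. scale (a ^ j) ` span F \<subseteq> Q"
  proof
    fix a assume "a \<in> A"
    then have power: "a ^ t \<in> ideal_pow I t"
      unfolding A(2) by (intro power_in_ideal_pow ideal_gen_base)
    show "\<exists>j. scale (a ^ j) ` span F \<subseteq> Q"
    proof (rule maximal_avoiding_subspace_absorbs_power[OF noeth \<open>finite F\<close> Q(1,2,4)])
      show "Q' = Q" if "subspace Q'" "Q' \<subseteq> span F" "Q \<subseteq> Q'" "Q' \<inter> Z \<subseteq> U" for Q'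
        using that Q(3) by (intro maximal) (auto simp: \<F>_def)
      show "scale (a ^ t) z \<in> Q" if "z \<in> Z" for z
        using killed[OF power that] Q(3) by blast
    qed
  qed
  then obtain N where "\<forall>c\<in>ideal_pow I N. scale c ` span F \<subseteq> Q"
    unfolding A(2) using ideal_pow_scale_image_subset[OF A(1) Q(1)] by blast
  then have "span {scale c e | c e. c \<in> ideal_pow I N \<and> e \<in> span F} \<subseteq> Q"
    by (intro span_minimal Q(1)) blast
  then have "submod_sum (span {scale c e | c e. c \<in> ideal_pow I N \<and> e \<in> span F}) U \<subseteq> Q"
    using Q(1,3) unfolding submod_sum_def by (auto intro: subspace_add)
  then show ?thesis
    using Q(4) by blast
qed

section \<open>The submodule \<open>H\<^sup>0\<^sub>m(M)\<close>\<close>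

lemma subspace_local_coh0: "subspace (local_coh0 scale I)"
proof -
  define C where "C n = mod_colon scale {0} (ideal_pow I n)" for n
  have eq: "local_coh0 scale I = \<Union>(range C)"
    unfolding local_coh0_def C_def mod_colon_def by auto
  have "C m \<subseteq> C n" if "m \<le> n" for m n
    unfolding C_def by (intro mod_colon_antimono ideal_pow_antimono that)
  then have chain: "X \<subseteq> Y \<or> Y \<subseteq> X" if "X \<in> range C" "Y \<in> range C" for X Y
    using that nat_le_linear by blast
  show ?thesis
    unfolding eq by (rule subspace_Union_chain[OF _ _ chain]) (auto simp: C_def subspace_mod_colon)
qed

lemma local_coh0_killed_by_ideal_pow:
  assumes noeth: "noetherian_ring TYPE('a)" and "fin_gen_module scale"
  shows "\<exists>t. local_coh0 scale I \<subseteq> mod_colon scale {0} (ideal_pow I t)"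
proof -
  obtain F where "finite F" "span F = UNIV"
    using \<open>fin_gen_module scale\<close> unfolding fin_gen_module_def by blast
  have "\<exists>G. finite G \<and> G \<subseteq> local_coh0 scale I \<and> span G = local_coh0 scale I"
    by (rule noetherian_subspace_finitely_generated[OF noeth \<open>finite F\<close> subspace_local_coh0])
      (simp add: \<open>span F = UNIV\<close>)
  then obtain G where G: "finite G" "G \<subseteq> local_coh0 scale I" "span G = local_coh0 scale I"
    by blast
  then have "\<forall>g\<in>G. \<exists>n. g \<in> mod_colon scale {0} (ideal_pow I n)"
    unfolding local_coh0_def mod_colon_def by auto
  then obtain n where n: "\<forall>g\<in>G. g \<in> mod_colon scale {0} (ideal_pow I (n g))"
    using bchoice by meson
  have "G \<subseteq> mod_colon scale {0} (ideal_pow I (\<Sum>g\<in>G. n g))"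
  proof
    fix g assume "g \<in> G"
    then have "n g \<le> (\<Sum>g\<in>G. n g)"
      using G(1) by (intro member_le_sum) auto
    then show "g \<in> mod_colon scale {0} (ideal_pow I (\<Sum>g\<in>G. n g))"
      using n \<open>g \<in> G\<close> mod_colon_antimono[OF ideal_pow_antimono] by blast
  qed
  then have "local_coh0 scale I \<subseteq> mod_colon scale {0} (ideal_pow I (\<Sum>g\<in>G. n g))"
    unfolding G(3)[symmetric] by (intro span_minimal subspace_mod_colon subspace_single_0)
  then show ?thesis ..
qed

lemma mod_colon_local_coh0_subset:
  assumes "noetherian_ring TYPE('a)" and "fin_gen_module scale"
  shows "mod_colon scale (local_coh0 scale I) I \<subseteq> local_coh0 scale I"
proof
  fix w assume w: "w \<in> mod_colon scale (local_coh0 scale I) I"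
  obtain t where t: "local_coh0 scale I \<subseteq> mod_colon scale {0} (ideal_pow I t)"
    using local_coh0_killed_by_ideal_pow[OF assms] by blast
  have "ideal_pow I (Suc t) \<subseteq> {c. \<forall>x\<in>{w}. scale c x \<in> {0}}"
    unfolding ideal_pow.simps
  proof (rule ideal_mult_subsetI)
    show "is_ideal {c. \<forall>x\<in>{w}. scale c x \<in> {0}}"
      by (rule is_ideal_scale_colon[OF subspace_single_0])
    fix a b assume "a \<in> I" "b \<in> ideal_pow I t"
    then have "scale b (scale a w) = 0"
      using w t unfolding mod_colon_def by blast
    then show "a * b \<in> {c. \<forall>x\<in>{w}. scale c x \<in> {0}}"
      by (simp add: mult.commute)
  qed
  then show "w \<in> local_coh0 scale I"
    unfolding local_coh0_def by blast
qed

lemma ideal_smult_inter_local_coh0: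
  assumes noeth: "noetherian_ring TYPE('a)" and "fin_gen_module scale" and "is_ideal I"
  shows "\<exists>k. ideal_smult scale (ideal_pow I k) \<inter> local_coh0 scale I \<subseteq> {0}"
proof -
  obtain F where F: "finite F" "span F = UNIV"
    using \<open>fin_gen_module scale\<close> unfolding fin_gen_module_def by blast
  obtain t where t: "local_coh0 scale I \<subseteq> mod_colon scale {0} (ideal_pow I t)"
    using local_coh0_killed_by_ideal_pow[OF noeth \<open>fin_gen_module scale\<close>] by blast
  have "\<exists>N. local_coh0 scale I \<inter>
      submod_sum (span {scale c e | c e. c \<in> ideal_pow I N \<and> e \<in> span F}) {0} \<subseteq> {0}"
    by (rule ideal_pow_sum_inter_subset[OF noeth F(1) \<open>is_ideal I\<close> subspace_single_0])
      (use t in \<open>auto simp: mod_colon_def span_zero\<close>)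
  moreover have "span {scale c e | c e. c \<in> K \<and> e \<in> span F} = ideal_smult scale K" for K
    unfolding ideal_smult_def F(2) by simp
  moreover have "submod_sum X {0} = X" for X :: "'b set"
    unfolding submod_sum_def by simp
  ultimately show ?thesis
    by auto
qed

lemma mod_colon_submod_sum_eq:
  assumes "subspace P" "subspace H" "L \<subseteq> P" "P \<inter> H \<subseteq> {0}"
    and colon: "mod_colon scale (submod_sum L H) J \<subseteq> submod_sum P H"
  shows "mod_colon scale (submod_sum L H) J = submod_sum (mod_colon scale L J) H"
proof (intro equalityI subsetI)
  fix x assume x: "x \<in> mod_colon scale (submod_sum L H) J"
  then have "x \<in> submod_sum P H"
    using colon by blast
  then obtain y h where yh: "y \<in> P" "h \<in> H" "x = y + h"
    unfolding mem_submod_sum by blast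
  have "scale j y \<in> L" if "j \<in> J" for j
  proof -
    obtain l h' where lh': "l \<in> L" "h' \<in> H" "scale j x = l + h'"
      using x \<open>j \<in> J\<close> unfolding mod_colon_def mem_submod_sum by blast
    have "scale j y - l = h' - scale j h"
      using lh'(3) unfolding yh(3) by (simp add: scale_right_distrib algebra_simps)
    moreover have "scale j y - l \<in> P"
      using assms(1,3) yh(1) lh'(1) by (auto intro: subspace_diff subspace_scale)
    moreover have "h' - scale j h \<in> H"
      using assms(2) yh(2) lh'(2) by (auto intro: subspace_diff subspace_scale)
    ultimately have "scale j y - l = 0"
      using assms(4) by auto
    then show ?thesis
      using lh'(1) by simp
  qed
  then show "x \<in> submod_sum (mod_colon scale L J) H"
    using yh unfolding mod_colon_def mem_submod_sum by blast
next
  fix x assume "x \<in> submod_sum (mod_colon scale L J) H"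
  then obtain y h where "\<forall>j\<in>J. scale j y \<in> L" "h \<in> H" "x = y + h"
    unfolding mod_colon_def mem_submod_sum by blast
  then show "x \<in> mod_colon scale (submod_sum L H) J"
    using assms(2) unfolding mod_colon_def
    by (auto simp: scale_right_distrib intro: submod_sumI subspace_scale)
qed

end

section \<open>The embedding of \<open>M\<close> into \<open>M\<^sup>A\<close>\<close>

definition fun_scale :: "('a \<Rightarrow> 'b \<Rightarrow> 'b) \<Rightarrow> 'a \<Rightarrow> ('i \<Rightarrow> 'b) \<Rightarrow> 'i \<Rightarrow> 'b" where
  "fun_scale scale c f = (\<lambda>i. scale c (f i))"

definition single_fun :: "'i \<Rightarrow> 'b::zero \<Rightarrow> 'i \<Rightarrow> 'b" where
  "single_fun i x = (\<lambda>j. if j = i then x else 0)"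

text \<open>\<open>tuples A H\<close> models \<open>H\<^sup>A \<subseteq> M\<^sup>A\<close> for finite \<open>A\<close>: functions vanishing outside \<open>A\<close>.\<close>

definition tuples :: "'i set \<Rightarrow> 'b::zero set \<Rightarrow> ('i \<Rightarrow> 'b) set" where
  "tuples A H = {f. (\<forall>i. i \<notin> A \<longrightarrow> f i = 0) \<and> (\<forall>a\<in>A. f a \<in> H)}"

definition scalings :: "('a \<Rightarrow> 'b \<Rightarrow> 'b) \<Rightarrow> 'a set \<Rightarrow> 'b \<Rightarrow> 'a \<Rightarrow> 'b::zero" where
  "scalings scale A y = (\<lambda>a. if a \<in> A then scale a y else 0)"

lemma sum_single_fun:
  assumes "finite A"
  shows "(\<Sum>a\<in>A. single_fun a (v a)) = (\<lambda>i. if i \<in> A then v i else (0::'b::comm_monoid_add))"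
  using assms by (induction A rule: finite_induct) (auto simp: single_fun_def fun_eq_iff)

context module
begin

lemma module_fun_scale: "module (fun_scale scale)"
  by unfold_locales (auto simp: fun_scale_def fun_eq_iff scale_right_distrib scale_left_distrib)

lemma module_hom_single_fun: "module_hom scale (fun_scale scale) (single_fun i)"
  unfolding module_hom_iff
  by (auto simp: module_axioms module_fun_scale single_fun_def fun_scale_def fun_eq_iff)

lemma module_hom_scalings: "module_hom scale (fun_scale scale) (scalings scale A)"
  unfolding module_hom_iff
  by (auto simp: module_axioms module_fun_scale scalings_def fun_scale_def fun_eq_iff
      scale_right_distrib mult.commute)

lemma subspace_tuples:
  assumes "subspace H"
  shows "module.subspace (fun_scale scale) (tuples A H)"
proof -
  interpret P: module "fun_scale scale :: 'a \<Rightarrow> ('i \<Rightarrow> 'b) \<Rightarrow> 'i \<Rightarrow> 'b"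
    by (rule module_fun_scale)
  show ?thesis
    using assms by (intro P.subspaceI) (auto simp: tuples_def fun_scale_def subspace_0 subspace_add subspace_scale)
qed

lemma span_single_fun_eq:
  fixes A :: "'i set"
  assumes "finite A" "span G = UNIV"
  shows "module.span (fun_scale scale) (\<Union>a\<in>A. single_fun a ` G) = tuples A UNIV"
proof -
  interpret P: module "fun_scale scale :: 'a \<Rightarrow> ('i \<Rightarrow> 'b) \<Rightarrow> 'i \<Rightarrow> 'b"
    by (rule module_fun_scale)
  have "P.span (\<Union>a\<in>A. single_fun a ` G) \<subseteq> tuples A UNIV"
    using subspace_tuples[OF subspace_UNIV] by (rule P.span_minimal[rotated]) (auto simp: single_fun_def tuples_def)
  moreover have "tuples A UNIV \<subseteq> P.span (\<Union>a\<in>A. single_fun a ` G)"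
  proof
    fix f :: "'i \<Rightarrow> 'b" assume f: "f \<in> tuples A UNIV"
    have "single_fun a x \<in> P.span (\<Union>a\<in>A. single_fun a ` G)" if "a \<in> A" for a x
    proof -
      have "single_fun a ` span G \<subseteq> P.span (single_fun a ` G)"
        by (rule module_hom.spans_image[OF module_hom_single_fun order_refl])
      also have "\<dots> \<subseteq> P.span (\<Union>a\<in>A. single_fun a ` G)"
        using that by (intro P.span_mono) blast
      finally show ?thesis
        using assms(2) by blast
    qed
    then have "(\<Sum>a\<in>A. single_fun a (f a)) \<in> P.span (\<Union>a\<in>A. single_fun a ` G)"
      by (intro P.span_sum)
    moreover have "(\<Sum>a\<in>A. single_fun a (f a)) = f"
      unfolding sum_single_fun[OF assms(1)] using f by (auto simp: tuples_def)
    ultimately show "f \<in> P.span (\<Union>a\<in>A. single_fun a ` G)"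
      by simp
  qed
  ultimately show ?thesis
    by (rule equalityI)
qed

lemma single_fun_ideal_smult_subset:
  assumes "\<And>x. single_fun i x \<in> E"
  shows "single_fun i ` ideal_smult scale K
    \<subseteq> module.span (fun_scale scale) {fun_scale scale c e | c e. c \<in> K \<and> e \<in> E}"
proof -
  interpret P: module "fun_scale scale :: 'a \<Rightarrow> ('i \<Rightarrow> 'b) \<Rightarrow> 'i \<Rightarrow> 'b"
    by (rule module_fun_scale)
  have "single_fun i ` ideal_smult scale K \<subseteq> P.span (single_fun i ` {scale k x | k x. k \<in> K})"
    unfolding ideal_smult_def by (rule module_hom.spans_image[OF module_hom_single_fun order_refl])
  also have "\<dots> \<subseteq> P.span {fun_scale scale c e | c e. c \<in> K \<and> e \<in> E}"
    using assms by (intro P.span_mono) (force simp: module_hom.scale[OF module_hom_single_fun])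
  finally show ?thesis .
qed

lemma scalings_mem_submod_sum:
  assumes "finite A" and y: "y \<in> mod_colon scale (submod_sum (ideal_smult scale K) H) A"
  shows "scalings scale A y \<in> submod_sum
    (module.span (fun_scale scale) {fun_scale scale c e | c e. c \<in> K \<and> e \<in> tuples A UNIV}) (tuples A H)"
proof -
  interpret P: module "fun_scale scale :: 'a \<Rightarrow> ('a \<Rightarrow> 'b) \<Rightarrow> 'a \<Rightarrow> 'b"
    by (rule module_fun_scale)
  let ?W = "P.span {fun_scale scale c e | c e. c \<in> K \<and> e \<in> tuples A UNIV}"
  have "\<forall>a\<in>A. \<exists>w. w \<in> ideal_smult scale K \<and> scale a y - w \<in> H"
    using y unfolding mod_colon_def mem_submod_sum by fastforce
  then obtain w where w: "\<forall>a\<in>A. w a \<in> ideal_smult scale K \<and> scale a y - w a \<in> H"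
    using bchoice by meson
  have "single_fun a (w a) \<in> ?W" if "a \<in> A" for a
  proof (rule subsetD[OF single_fun_ideal_smult_subset])
    show "single_fun a x \<in> tuples A UNIV" for x
      using that unfolding tuples_def single_fun_def by simp
    show "single_fun a (w a) \<in> single_fun a ` ideal_smult scale K"
      using w that by simp
  qed
  then have "(\<Sum>a\<in>A. single_fun a (w a)) \<in> ?W"
    by (intro P.span_sum)
  moreover have "scalings scale A y - (\<Sum>a\<in>A. single_fun a (w a)) \<in> tuples A H"
    using w unfolding tuples_def sum_single_fun[OF assms(1)] scalings_def by auto
  ultimately have "(\<Sum>a\<in>A. single_fun a (w a)) + (scalings scale A y - (\<Sum>a\<in>A. single_fun a (w a)))
      \<in> submod_sum ?W (tuples A H)"
    by (rule submod_sumI)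
  then show ?thesis
    by simp
qed

lemma mem_submod_sum_if_scalings_mem:
  assumes H: "subspace H" "mod_colon scale H (ideal_gen A) \<subseteq> H"
    and "scalings scale A y \<in> submod_sum (scalings scale A ` P) (tuples A H)"
  shows "y \<in> submod_sum P H"
proof -
  obtain u h where uh: "u \<in> scalings scale A ` P" "h \<in> tuples A H" "scalings scale A y = u + h"
    using assms(3) unfolding mem_submod_sum by blast
  then obtain y' where y': "y' \<in> P" "scalings scale A y = scalings scale A y' + h"
    by blast
  have "\<forall>a\<in>A. scale a (y - y') \<in> H"
  proof
    fix a assume a: "a \<in> A"
    have "scale a y = scale a y' + h a"
      using fun_cong[OF y'(2), of a] a by (simp add: scalings_def)
    then show "scale a (y - y') \<in> H"
      using uh(2) a by (simp add: scale_right_diff_distrib tuples_def)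
  qed
  then have "y - y' \<in> mod_colon scale H A"
    unfolding mod_colon_def by simp
  then have "y - y' \<in> H"
    using mod_colon_ideal_gen[OF H(1)] H(2) by blast
  then have "y' + (y - y') \<in> submod_sum P H"
    using y'(1) by (intro submod_sumI)
  then show ?thesis
    by simp
qed

text \<open>Artin--Rees for the embedding \<open>y \<mapsto> (a y)\<^sub>a\<^sub>\<in>\<^sub>A\<close> of \<open>M\<close> into \<open>M\<^sup>A\<close> and the submodule
  \<open>U\<close> generated by the image of \<open>I\<^sup>k M\<close> and \<open>H\<^sup>A\<close>, where \<open>A\<close> generates \<open>I\<close>.\<close>

lemma scalings_ideal_pow_sum_inter_subset:
  fixes A :: "'a set" and H :: "'b set" and k :: nat
  defines "U \<equiv> submod_sum (scalings scale A ` ideal_smult scale (ideal_pow (ideal_gen A) k)) (tuples A H)"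
  assumes noeth: "noetherian_ring TYPE('a)" and "fin_gen_module scale" and "finite A" and H: "subspace H"
  shows "\<exists>N. range (scalings scale A) \<inter> submod_sum (module.span (fun_scale scale)
      {fun_scale scale c e | c e. c \<in> ideal_pow (ideal_gen A) N \<and> e \<in> tuples A UNIV}) U
    \<subseteq> U"
proof -
  interpret P: module "fun_scale scale :: 'a \<Rightarrow> ('a \<Rightarrow> 'b) \<Rightarrow> 'a \<Rightarrow> 'b"
    by (rule module_fun_scale)
  obtain G where G: "finite G" "span G = UNIV"
    using \<open>fin_gen_module scale\<close> unfolding fin_gen_module_def by blast
  have span_G: "P.span (\<Union>a\<in>A. single_fun a ` G) = tuples A UNIV"
    by (rule span_single_fun_eq[OF \<open>finite A\<close> G(2)])
  have "P.subspace U"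
    unfolding U_def by (intro P.subspace_submod_sum subspace_ideal_smult subspace_tuples H
        module_hom.subspace_image[OF module_hom_scalings])
  moreover have "U \<subseteq> P.span (\<Union>a\<in>A. single_fun a ` G)"
    unfolding span_G U_def submod_sum_def tuples_def scalings_def by auto
  moreover have "fun_scale scale c (scalings scale A y) \<in> U"
    if "c \<in> ideal_pow (ideal_gen A) k" for c y
  proof -
    have "scale c y \<in> ideal_smult scale (ideal_pow (ideal_gen A) k)"
      unfolding ideal_smult_def using that by (intro span_base) blast
    then have "scalings scale A (scale c y) + 0 \<in> U"
      unfolding U_def using subspace_0[OF H] by (intro submod_sumI imageI) (auto simp: tuples_def)
    then show ?thesis
      by (simp add: module_hom.scale[OF module_hom_scalings])
  qed
  moreover have "finite (\<Union>a\<in>A. single_fun a ` G)"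
    using \<open>finite A\<close> G(1) by simp
  ultimately show ?thesis
    unfolding span_G[symmetric]
    by (intro P.ideal_pow_sum_inter_subset[OF noeth _ is_ideal_ideal_gen]) blast+
qed

lemma colon_ideal_pow_sum_subset:
  assumes noeth: "noetherian_ring TYPE('a)" and "fin_gen_module scale" and "is_ideal I"
    and H: "subspace H" "mod_colon scale H I \<subseteq> H"
  shows "\<exists>N. mod_colon scale (submod_sum (ideal_smult scale (ideal_pow I N)) H) I
      \<subseteq> submod_sum (ideal_smult scale (ideal_pow I k)) H"
proof -
  interpret P: module "fun_scale scale :: 'a \<Rightarrow> ('a \<Rightarrow> 'b) \<Rightarrow> 'a \<Rightarrow> 'b"
    by (rule module_fun_scale)
  obtain A where A: "finite A" "I = ideal_gen A"
    using noeth \<open>is_ideal I\<close> unfolding noetherian_ring_def by blast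
  let ?U = "submod_sum (scalings scale A ` ideal_smult scale (ideal_pow I k)) (tuples A H)"
  obtain N where N: "range (scalings scale A) \<inter> submod_sum (P.span
      {fun_scale scale c e | c e. c \<in> ideal_pow I N \<and> e \<in> tuples A UNIV}) ?U \<subseteq> ?U"
    using scalings_ideal_pow_sum_inter_subset[OF noeth \<open>fin_gen_module scale\<close> A(1) H(1), of k]
    unfolding A(2) by blast
  have "tuples A H \<subseteq> ?U"
  proof
    fix f assume "f \<in> tuples A H"
    then have "scalings scale A 0 + f \<in> ?U"
      by (intro submod_sumI imageI subspace_0 subspace_ideal_smult)
    then show "f \<in> ?U"
      by (simp add: module_hom.zero[OF module_hom_scalings])
  qed
  show ?thesis
  proof (intro exI[of _ N] subsetI)
    fix y assume "y \<in> mod_colon scale (submod_sum (ideal_smult scale (ideal_pow I N)) H) I"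
    then have "y \<in> mod_colon scale (submod_sum (ideal_smult scale (ideal_pow I N)) H) A"
      unfolding A(2) mod_colon_def using ideal_gen_base by blast
    from scalings_mem_submod_sum[OF A(1) this]
    have "scalings scale A y \<in> submod_sum
        (P.span {fun_scale scale c e | c e. c \<in> ideal_pow I N \<and> e \<in> tuples A UNIV}) ?U"
      using submod_sum_mono[OF order_refl \<open>tuples A H \<subseteq> ?U\<close>] by blast
    then have "scalings scale A y \<in> ?U"
      using N by blast
    then show "y \<in> submod_sum (ideal_smult scale (ideal_pow I k)) H"
      by (rule mem_submod_sum_if_scalings_mem[OF H(1) H(2)[unfolded A(2)]])
  qed
qed

end

theorem lemma2p4:
  fixes scale :: "'a::comm_ring_1 \<Rightarrow> 'b::ab_group_add \<Rightarrow> 'b"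
    and m :: "'a set"
  assumes "noetherian_ring TYPE('a)"
    and "local_ring m"
    and "module scale"
    and "fin_gen_module scale"
    and "module_dim scale \<ge> 1"
  shows "\<exists>n4::nat. n4 > 0 \<and> (\<forall>K. is_ideal K \<and> K \<subseteq> ideal_pow m n4 \<longrightarrow>
           mod_colon scale (submod_sum (ideal_smult scale K) (local_coh0 scale m)) m =
           submod_sum (mod_colon scale (ideal_smult scale K) m) (local_coh0 scale m))"
proof -
  interpret module scale by fact
  let ?H = "local_coh0 scale m" and ?mM = "\<lambda>n. ideal_smult scale (ideal_pow m n)"
  have "is_ideal m"
    using \<open>local_ring m\<close> unfolding local_ring_def maximal_ideal_def by blast
  obtain k where k: "?mM k \<inter> ?H \<subseteq> {0}"
    using ideal_smult_inter_local_coh0[OF assms(1,4) \<open>is_ideal m\<close>] by blast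
  obtain N where N: "mod_colon scale (submod_sum (?mM N) ?H) m \<subseteq> submod_sum (?mM k) ?H"
    using colon_ideal_pow_sum_subset[OF assms(1,4) \<open>is_ideal m\<close> subspace_local_coh0
        mod_colon_local_coh0_subset[OF assms(1,4)]] by blast
  have "mod_colon scale (submod_sum (ideal_smult scale K) ?H) m =
      submod_sum (mod_colon scale (ideal_smult scale K) m) ?H"
    if "K \<subseteq> ideal_pow m (Suc (max N k))" for K
  proof (rule mod_colon_submod_sum_eq[OF subspace_ideal_smult subspace_local_coh0 _ k])
    have KM: "ideal_smult scale K \<subseteq> ?mM n" if "n \<le> Suc (max N k)" for n
      using \<open>K \<subseteq> _\<close> ideal_pow_antimono[OF that] by (intro ideal_smult_mono) blast
    then show "ideal_smult scale K \<subseteq> ?mM k"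
      by simp
    have "mod_colon scale (submod_sum (ideal_smult scale K) ?H) m
        \<subseteq> mod_colon scale (submod_sum (?mM N) ?H) m"
      by (intro mod_colon_mono submod_sum_mono KM order_refl) simp
    then show "mod_colon scale (submod_sum (ideal_smult scale K) ?H) m \<subseteq> submod_sum (?mM k) ?H"
      using N by (rule order_trans)
  qed
  then show ?thesis
    by (intro exI[of _ "Suc (max N k)"]) simp
qed

end
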